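(* Let $n\geq4$, $D_n=\{x\in\mathbb{Z}^n:\sum_i x_i\equiv0\bmod2\}$, $\mathcal{P}$ its Voronoi region with vertex set $V_{\mathcal{P}}$, and $D_n^\#$ the dual lattice. Let $\tilde G$ be the Cayley graph on $\frac12D_n^\#$ with generating set $\frac12V_{\mathcal{P}}$, with graph distance $\tilde d$. Then for all $u_1,u_2\in\frac12D_n^\#$, $\tilde d(u_1,u_2)=2$ implies $\Vert u_1-u_2\Vert_{\mathcal{P}}=1$.
   Context: The Voronoi region of a lattice $\Lambda\subset\mathbb{R}^n$ is $\{z:\langle z-x,z-x\rangle\geq\langle z,z\rangle\ \forall x\in\Lambda\}$; $D_n^\#=\{y:\langle x,y\rangle\in\mathbb{Z}\ \forall x\in D_n\}$. $\Vert x\Vert_{\mathcal{P}}=\inf\{\lambda\geq0:x\in\lambda\mathcal{P}\}$, which for this $\mathcal{P}$ equals $\max_{i\neq j}(|x_i|+|x_j|)$. It is known that $V_{\mathcal{P}}$ consists of the $2n$ vectors $\pm e_i$ and the $2^n$ vectors $(\pm\frac12,\dots,\pm\frac12)$. In the Cayley graph, $x,y$ are adjacent iff $x-y\in\frac12V_{\mathcal{P}}$. *)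

theory Defs
  imports "HOL-Analysis.Analysis" "HOL-Library.Extended_Nat"
begin

definition Dn :: "(real^'n) set" where
  "Dn = {x. (\<forall>i. x $ i \<in> \<int>) \<and> (\<Sum>i\<in>UNIV. x $ i) / 2 \<in> \<int>}"

definition voronoi :: "(real^'n) set \<Rightarrow> (real^'n) set" where
  "voronoi L = {z. \<forall>x\<in>L. (z - x) \<bullet> (z - x) \<ge> z \<bullet> z}"

definition dual_lattice :: "(real^'n) set \<Rightarrow> (real^'n) set" where
  "dual_lattice L = {y. \<forall>x\<in>L. x \<bullet> y \<in> \<int>}"

definition vertices :: "(real^'n) set \<Rightarrow> (real^'n) set" where
  "vertices P = {v. v extreme_point_of P}"

definition gauge_norm :: "(real^'n) set \<Rightarrow> real^'n \<Rightarrow> real" where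
  "gauge_norm P x = Inf {t. t \<ge> 0 \<and> x \<in> (\<lambda>v. t *\<^sub>R v) ` P}"

definition scale_set :: "real \<Rightarrow> (real^'n) set \<Rightarrow> (real^'n) set" where
  "scale_set c A = (\<lambda>v. c *\<^sub>R v) ` A"

fun cayley_walk :: "(real^'n) set \<Rightarrow> (real^'n) set \<Rightarrow> nat \<Rightarrow> real^'n \<Rightarrow> real^'n \<Rightarrow> bool" where
  "cayley_walk A S 0 u v \<longleftrightarrow> u \<in> A \<and> u = v"
| "cayley_walk A S (Suc k) u v \<longleftrightarrow> (\<exists>w\<in>A. cayley_walk A S k u w \<and> v \<in> A \<and> w - v \<in> S)"

text \<open>Graph distance (infinity if not connected).\<close>
definition cayley_dist :: "(real^'n) set \<Rightarrow> (real^'n) set \<Rightarrow> real^'n \<Rightarrow> real^'n \<Rightarrow> enat" where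
  "cayley_dist A S u v = (INF k\<in>{k. cayley_walk A S k u v}. enat k)"

end

theory Submission
  imports Defs
begin

(* The Voronoi cell of D_n is the polytope P = {z. |z_i| + |z_j| <= 1 for all i ~= j}: the
   lattice vectors +-e_i +-e_j cut out these inequalities, and conversely for z in P and an
   integer vector y of even coordinate sum one has 2 z.y <= |y|^2. For n >= 3 the vertices of P
   are the signed unit vectors +-e_i and the vectors (+-1/2, ..., +-1/2).
   If d(u1, u2) = 2 then u1 - u2 = (v1 + v2)/2 for vertices v1, v2, and u1 - u2 is neither 0
   nor half a vertex. Checking the three kinds of sums of two vertices shows that v1 + v2 then
   has two coordinates with |.| + |.| >= 2, so (v1 + v2)/2 lies on the boundary of the convex
   set P and has gauge exactly 1. *)

definition pair_sum_polytope :: "(real^'n) set" where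
  "pair_sum_polytope = {z. \<forall>i j. i \<noteq> j \<longrightarrow> \<bar>z$i\<bar> + \<bar>z$j\<bar> \<le> 1}"

definition signed_axes :: "(real^'n) set" where
  "signed_axes = {axis i c | i c. \<bar>c\<bar> = 1}"

definition half_sign_vectors :: "(real^'n) set" where
  "half_sign_vectors = {v. \<forall>i. \<bar>v$i\<bar> = 1/2}"

lemma pair_sum_polytopeI:
  "(\<And>i j. i \<noteq> j \<Longrightarrow> \<bar>z$i\<bar> + \<bar>z$j\<bar> \<le> 1) \<Longrightarrow> z \<in> pair_sum_polytope"
  unfolding pair_sum_polytope_def by blast

lemma pair_sum_polytopeD:
  "z \<in> pair_sum_polytope \<Longrightarrow> i \<noteq> j \<Longrightarrow> \<bar>z$i\<bar> + \<bar>z$j\<bar> \<le> 1"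
  unfolding pair_sum_polytope_def by blast

lemma exists_other_index:
  fixes i :: "'a::finite"
  assumes "CARD('a) \<ge> 2"
  obtains j where "j \<noteq> i"
proof -
  have "card (UNIV - {i}) \<noteq> 0" using assms by (simp add: card_Diff_singleton)
  then obtain j where "j \<in> UNIV - {i}" by (metis all_not_in_conv card.empty)
  then show ?thesis using that by blast
qed

lemma exists_two_other_indices:
  fixes i :: "'a::finite"
  assumes "CARD('a) \<ge> 3"
  obtains j l where "j \<noteq> i" "l \<noteq> i" "j \<noteq> l"
proof -
  have "card (UNIV - {i}) = CARD('a) - 1" by (simp add: card_Diff_singleton)
  then have "\<not> card (UNIV - {i}) \<le> Suc 0" using assms by linarith
  then obtain j l where "j \<in> UNIV - {i}" "l \<in> UNIV - {i}" "j \<noteq> l"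
    unfolding card_le_Suc0_iff_eq[OF finite] by blast
  then show ?thesis using that by blast
qed

lemma sum_mono_except_pair:
  fixes f g :: "'a::finite \<Rightarrow> 'b::ordered_comm_monoid_add"
  assumes "k \<noteq> j" and "f k + f j \<le> g k + g j"
    and "\<And>i. i \<noteq> k \<Longrightarrow> i \<noteq> j \<Longrightarrow> f i \<le> g i"
  shows "sum f UNIV \<le> sum g UNIV"
proof -
  have split: "sum h UNIV = (h k + h j) + sum h (UNIV - {k, j})" for h :: "'a \<Rightarrow> 'b"
    using assms(1) by (simp add: sum.remove[of UNIV k] sum.remove[of "UNIV - {k}" j]
        Diff_insert2[symmetric] add.assoc)
  show ?thesis
    unfolding split by (rule add_mono[OF assms(2) sum_mono]) (use assms(3) in auto)
qed

lemma sum_neg_if_pairwise_nonpos: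
  fixes g :: "'a::finite \<Rightarrow> real"
  assumes "CARD('a) \<ge> 3" and pair: "\<And>i j. i \<noteq> j \<Longrightarrow> g i + g j \<le> 0" and "g k \<noteq> 0"
  shows "sum g UNIV < 0"
proof (cases "\<exists>m. g m > 0")
  case True
  then obtain m where m: "g m > 0" by blast
  obtain j l where jl: "j \<noteq> m" "l \<noteq> m" "j \<noteq> l"
    using exists_two_other_indices[OF assms(1)] by metis
  have "sum g UNIV \<le> (\<Sum>i\<in>UNIV. if i = l then g l else 0)"
  proof (rule sum_mono_except_pair[of m j])
    show "g m + g j \<le> (if m = l then g l else 0) + (if j = l then g l else 0)"
      using pair[of m j] jl by simp
    show "g i \<le> (if i = l then g l else 0)" if "i \<noteq> m" "i \<noteq> j" for i
      using pair[of m i] m that by simp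
  qed (use jl in simp)
  also have "\<dots> = g l" by simp
  also have "g l < 0" using pair[of m l] m jl by auto
  finally show ?thesis .
next
  case False
  have "sum g UNIV \<le> (\<Sum>i\<in>UNIV. if i = k then g k else 0)"
    using False by (intro sum_mono) (auto simp: not_less)
  also have "\<dots> = g k" by simp
  also have "g k < 0" using False assms(3) by (metis not_less_iff_gr_or_eq)
  finally show ?thesis .
qed

lemma two_mult_abs_int_le_sq:
  fixes t :: real and y :: int
  assumes "0 \<le> t" and "t \<le> 1/2 \<or> (t \<le> 1 \<and> \<bar>y\<bar> \<noteq> 1)"
  shows "2 * t * \<bar>real_of_int y\<bar> \<le> real_of_int y ^ 2"
proof (cases "y = 0")
  case False
  define r where "r = \<bar>real_of_int y\<bar>"
  have sq: "real_of_int y ^ 2 = r * r"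
    unfolding r_def by (simp add: power2_eq_square)
  have "1 \<le> \<bar>y\<bar>" using False by linarith
  then have r1: "1 \<le> r" unfolding r_def by (metis of_int_1 of_int_abs of_int_le_iff)
  have "2 * t * r \<le> r * r"
  proof (cases "t \<le> 1/2")
    case True
    then have "2 * t * r \<le> 1 * r" using r1 by (intro mult_right_mono) auto
    also have "\<dots> \<le> r * r" using r1 by (intro mult_right_mono) auto
    finally show ?thesis .
  next
    case False
    with assms(2) have "t \<le> 1" and "\<bar>y\<bar> \<noteq> 1" by auto
    then have "2 \<le> \<bar>y\<bar>" using \<open>1 \<le> \<bar>y\<bar>\<close> by linarith
    then have r2: "2 \<le> r" unfolding r_def by (metis of_int_abs of_int_le_iff of_int_numeral)
    have "2 * t * r \<le> 2 * r" using \<open>t \<le> 1\<close> r1 by (intro mult_right_mono) auto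
    also have "\<dots> \<le> r * r" using r2 r1 by (intro mult_right_mono) auto
    finally show ?thesis .
  qed
  then show ?thesis unfolding sq r_def .
qed simp

lemma two_mult_abs_int_pair_le_sq:
  fixes s t :: real and y y' :: int
  assumes "0 \<le> s" and "s + t \<le> 1" and "\<bar>y\<bar> = 1" and "y' \<noteq> 0"
  shows "2 * s * \<bar>real_of_int y\<bar> + 2 * t * \<bar>real_of_int y'\<bar>
           \<le> real_of_int y ^ 2 + real_of_int y' ^ 2"
proof -
  define Y where "Y = \<bar>real_of_int y'\<bar>"
  have Y1: "1 \<le> Y" using assms(4) unfolding Y_def by linarith
  have y1: "\<bar>real_of_int y\<bar> = 1"
    using assms(3) by (metis of_int_1 of_int_abs)
  then have y2: "real_of_int y ^ 2 = 1"
    by (metis power2_abs one_power2)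
  have "t * Y \<le> (1 - s) * Y" using assms(2) Y1 by (intro mult_right_mono) auto
  moreover have "0 \<le> s * (Y - 1)" using assms(1) Y1 by simp
  moreover have "0 \<le> (Y - 1) ^ 2" by simp
  ultimately have "2 * s + 2 * t * Y \<le> 1 + Y ^ 2"
    by (simp add: algebra_simps power2_eq_square)
  moreover have "real_of_int y' ^ 2 = Y ^ 2" unfolding Y_def by simp
  ultimately show ?thesis unfolding y1 y2 Y_def[symmetric] by linarith
qed

text \<open>The only way to exceed \<open>\<Sum> y\<^sub>i\<^sup>2\<close> would be a coordinate with \<open>t\<^sub>k > 1/2\<close>
  and \<open>\<bar>y\<^sub>k\<bar> = 1\<close>; parity then supplies a second odd \<open>y\<^sub>j\<close>, and the pair \<open>k, j\<close>
  is controlled jointly.\<close>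
lemma two_sum_mult_abs_le_sum_sq:
  fixes t :: "'a::finite \<Rightarrow> real" and y :: "'a \<Rightarrow> int"
  assumes "CARD('a) \<ge> 2" and t0: "\<And>i. 0 \<le> t i"
    and pair: "\<And>i j. i \<noteq> j \<Longrightarrow> t i + t j \<le> 1" and even: "even (sum y UNIV)"
  shows "(\<Sum>i\<in>UNIV. 2 * t i * \<bar>real_of_int (y i)\<bar>) \<le> (\<Sum>i\<in>UNIV. real_of_int (y i) ^ 2)"
proof -
  have t1: "t i \<le> 1" for i
  proof -
    obtain j where "i \<noteq> j" using exists_other_index[OF assms(1), of i] by metis
    then show ?thesis using pair[of i j] t0[of j] by linarith
  qed
  show ?thesis
  proof (cases "\<forall>i. t i \<le> 1/2")
    case True
    then show ?thesis using t0 by (intro sum_mono two_mult_abs_int_le_sq) auto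
  next
    case False
    then obtain k where k: "t k > 1/2" by (auto simp: not_le)
    have small: "t i \<le> 1/2" if "i \<noteq> k" for i
      using pair[OF that] k by linarith
    show ?thesis
    proof (cases "\<bar>y k\<bar> = 1")
      case False
      show ?thesis
      proof (intro sum_mono two_mult_abs_int_le_sq[OF t0])
        show "t i \<le> 1/2 \<or> (t i \<le> 1 \<and> \<bar>y i\<bar> \<noteq> 1)" for i
          using small t1 False by (cases "i = k") auto
      qed
    next
      case True
      have "odd (y k)" using True by presburger
      have "\<exists>j. j \<noteq> k \<and> odd (y j)"
      proof (rule ccontr)
        assume "\<nexists>j. j \<noteq> k \<and> odd (y j)"
        then have "even (sum y (UNIV - {k}))" by (intro dvd_sum) auto
        then show False
          using even \<open>odd (y k)\<close> by (simp add: sum.remove[of UNIV k])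
      qed
      then obtain j where j: "j \<noteq> k" "odd (y j)" by blast
      then have "y j \<noteq> 0" by auto
      show ?thesis
      proof (rule sum_mono_except_pair[OF j(1)[symmetric]])
        show "2 * t k * \<bar>real_of_int (y k)\<bar> + 2 * t j * \<bar>real_of_int (y j)\<bar>
                \<le> real_of_int (y k) ^ 2 + real_of_int (y j) ^ 2"
          by (rule two_mult_abs_int_pair_le_sq[OF t0 pair[OF j(1)[symmetric]] True \<open>y j \<noteq> 0\<close>])
        show "2 * t i * \<bar>real_of_int (y i)\<bar> \<le> real_of_int (y i) ^ 2" if "i \<noteq> k" "i \<noteq> j" for i
          using small[OF that(1)] by (intro two_mult_abs_int_le_sq[OF t0]) simp
      qed
    qed
  qed
qed

lemma mem_voronoi_iff: "z \<in> voronoi L \<longleftrightarrow> (\<forall>x\<in>L. 2 * (z \<bullet> x) \<le> x \<bullet> x)"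
  unfolding voronoi_def by (auto simp: inner_diff_left inner_diff_right inner_commute)

lemma Dn_integer_coordinates:
  fixes x :: "real^'n"
  assumes "x \<in> Dn"
  obtains y :: "'n \<Rightarrow> int" where "\<And>i. x$i = of_int (y i)" and "even (sum y UNIV)"
proof -
  define y where "y i = \<lfloor>x$i\<rfloor>" for i
  have xy: "x$i = of_int (y i)" for i
  proof -
    have "x$i \<in> \<int>" using assms unfolding Dn_def by blast
    then show ?thesis unfolding y_def by (metis Ints_cases floor_of_int)
  qed
  have "(\<Sum>i\<in>UNIV. x$i) / 2 \<in> \<int>" using assms unfolding Dn_def by blast
  then obtain m where "(\<Sum>i\<in>UNIV. x$i) / 2 = of_int m" by (elim Ints_cases)
  then have "of_int (sum y UNIV) = (of_int (2 * m) :: real)"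
    unfolding xy by simp
  then have "even (sum y UNIV)" by (simp only: of_int_eq_iff) simp
  with xy show ?thesis by (rule that)
qed

lemma axis_add_axis_in_Dn:
  assumes "\<bar>s\<bar> = 1" and "\<bar>t\<bar> = 1"
  shows "axis i s + axis j t \<in> (Dn :: (real^'n) set)"
proof -
  have "s \<in> \<int>" "t \<in> \<int>" "(s + t) / 2 \<in> \<int>"
    using assms by (auto simp: abs_if split: if_splits)
  then show ?thesis
    unfolding Dn_def by (auto simp: axis_def sum.distrib)
qed

lemma voronoi_Dn_subset_pair_sum_polytope:
  "voronoi (Dn :: (real^'n) set) \<subseteq> pair_sum_polytope"
proof
  fix z :: "real^'n" assume z: "z \<in> voronoi Dn"
  show "z \<in> pair_sum_polytope"
  proof (rule pair_sum_polytopeI)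
    fix i j :: 'n assume "i \<noteq> j"
    \<comment> \<open>signs of \<open>z$i\<close>, \<open>z$j\<close>, avoiding \<open>sgn 0 = 0\<close>, which would leave the lattice\<close>
    define s where "s = sgn (z$i) + (if z$i = 0 then 1 else 0)"
    define t where "t = sgn (z$j) + (if z$j = 0 then 1 else 0)"
    have st: "\<bar>s\<bar> = 1" "\<bar>t\<bar> = 1" "s * z$i = \<bar>z$i\<bar>" "t * z$j = \<bar>z$j\<bar>"
      unfolding s_def t_def by (auto simp: sgn_if)
    have "2 * (z \<bullet> (axis i s + axis j t)) \<le> (axis i s + axis j t) \<bullet> (axis i s + axis j t)"
      using z axis_add_axis_in_Dn[OF st(1,2)] unfolding mem_voronoi_iff by blast
    then have "2 * (z$i * s) + 2 * (z$j * t) \<le> s * s + t * t"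
      using \<open>i \<noteq> j\<close>
      by (simp only: inner_add_left inner_add_right inner_axis_axis inner_axis inner_real_def)
        (simp add: algebra_simps axis_def)
    moreover have "s * s = 1" "t * t = 1"
      using st(1,2) by (metis abs_mult_self_eq mult_1)+
    ultimately show "\<bar>z$i\<bar> + \<bar>z$j\<bar> \<le> 1"
      using st(3,4) by (simp add: mult.commute)
  qed
qed

lemma pair_sum_polytope_subset_voronoi_Dn:
  assumes "CARD('n) \<ge> 2"
  shows "pair_sum_polytope \<subseteq> voronoi (Dn :: (real^'n) set)"
proof
  fix z :: "real^'n" assume z: "z \<in> pair_sum_polytope"
  show "z \<in> voronoi Dn" unfolding mem_voronoi_iff
  proof
    fix x :: "real^'n" assume "x \<in> Dn"
    then obtain y where xy: "\<And>i. x$i = of_int (y i)" and "even (sum y UNIV)"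
      using Dn_integer_coordinates by metis
    have "z \<bullet> x \<le> (\<Sum>i\<in>UNIV. \<bar>z$i\<bar> * \<bar>real_of_int (y i)\<bar>)"
      unfolding inner_vec_def xy inner_real_def
      by (intro sum_mono) (metis abs_ge_self abs_mult)
    moreover have "(\<Sum>i\<in>UNIV. 2 * \<bar>z$i\<bar> * \<bar>real_of_int (y i)\<bar>)
        \<le> (\<Sum>i\<in>UNIV. real_of_int (y i) ^ 2)"
    proof (rule two_sum_mult_abs_le_sum_sq[OF assms _ _ \<open>even (sum y UNIV)\<close>])
      show "\<bar>z$i\<bar> + \<bar>z$j\<bar> \<le> 1" if "i \<noteq> j" for i j
        using z that by (rule pair_sum_polytopeD)
    qed simp
    moreover have "(\<Sum>i\<in>UNIV. 2 * \<bar>z$i\<bar> * \<bar>real_of_int (y i)\<bar>)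
        = 2 * (\<Sum>i\<in>UNIV. \<bar>z$i\<bar> * \<bar>real_of_int (y i)\<bar>)"
      by (simp add: sum_distrib_left mult.assoc)
    moreover have "x \<bullet> x = (\<Sum>i\<in>UNIV. real_of_int (y i) ^ 2)"
      unfolding inner_vec_def xy inner_real_def by (simp add: power2_eq_square)
    ultimately show "2 * (z \<bullet> x) \<le> x \<bullet> x" by linarith
  qed
qed

lemma voronoi_Dn_eq:
  assumes "CARD('n) \<ge> 2"
  shows "voronoi (Dn :: (real^'n) set) = pair_sum_polytope"
  using voronoi_Dn_subset_pair_sum_polytope pair_sum_polytope_subset_voronoi_Dn[OF assms]
  by (rule subset_antisym)

lemma pair_sum_polytope_abs_le_1:
  assumes "CARD('n) \<ge> 2" and "(z :: real^'n) \<in> pair_sum_polytope"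
  shows "\<bar>z$i\<bar> \<le> 1"
proof -
  obtain j where "i \<noteq> j" using exists_other_index[OF assms(1), of i] by metis
  with assms(2) have "\<bar>z$i\<bar> + \<bar>z$j\<bar> \<le> 1" by (rule pair_sum_polytopeD)
  then show ?thesis by linarith
qed

lemma convex_pair_sum_polytope: "convex pair_sum_polytope"
proof (rule convexI)
  fix x y :: "real^'n" and u v :: real
  assume x: "x \<in> pair_sum_polytope" and y: "y \<in> pair_sum_polytope"
    and uv: "0 \<le> u" "0 \<le> v" "u + v = 1"
  have abs_le: "\<bar>(u *\<^sub>R x + v *\<^sub>R y)$l\<bar> \<le> u * \<bar>x$l\<bar> + v * \<bar>y$l\<bar>" for l
    using abs_triangle_ineq[of "u * x$l" "v * y$l"] uv by (simp add: abs_mult)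
  show "u *\<^sub>R x + v *\<^sub>R y \<in> pair_sum_polytope"
  proof (rule pair_sum_polytopeI)
    fix i j :: 'n assume "i \<noteq> j"
    have "u * (\<bar>x$i\<bar> + \<bar>x$j\<bar>) \<le> u" "v * (\<bar>y$i\<bar> + \<bar>y$j\<bar>) \<le> v"
      using pair_sum_polytopeD[OF x \<open>i \<noteq> j\<close>] pair_sum_polytopeD[OF y \<open>i \<noteq> j\<close>] uv
      by (simp_all add: mult_left_le)
    then show "\<bar>(u *\<^sub>R x + v *\<^sub>R y)$i\<bar> + \<bar>(u *\<^sub>R x + v *\<^sub>R y)$j\<bar> \<le> 1"
      using abs_le[of i] abs_le[of j] uv(3) by (simp add: algebra_simps)
  qed
qed

lemma gauge_norm_pair_sum_polytope_eq_1:
  assumes a: "a \<in> pair_sum_polytope" and "i \<noteq> j" and "1 \<le> \<bar>a$i\<bar> + \<bar>a$j\<bar>"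
  shows "gauge_norm pair_sum_polytope a = 1"
  unfolding gauge_norm_def
proof (rule cInf_eq_minimum)
  show "1 \<in> {t. t \<ge> 0 \<and> a \<in> (\<lambda>v. t *\<^sub>R v) ` pair_sum_polytope}"
    using a by simp
next
  fix t assume "t \<in> {t. t \<ge> 0 \<and> a \<in> (\<lambda>v. t *\<^sub>R v) ` pair_sum_polytope}"
  then obtain w where t0: "0 \<le> t" and w: "w \<in> pair_sum_polytope" and aw: "a = t *\<^sub>R w"
    by blast
  have "\<bar>a$i\<bar> + \<bar>a$j\<bar> = t * (\<bar>w$i\<bar> + \<bar>w$j\<bar>)"
    using aw t0 by (simp add: abs_mult algebra_simps)
  also have "\<dots> \<le> t" using t0 pair_sum_polytopeD[OF w \<open>i \<noteq> j\<close>] by (simp add: mult_left_le)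
  finally show "1 \<le> t" using assms(3) by linarith
qed

lemma signed_axes_subset_pair_sum_polytope: "signed_axes \<subseteq> pair_sum_polytope"
  unfolding signed_axes_def by (auto intro!: pair_sum_polytopeI simp: axis_def)

lemma half_sign_vectors_subset_pair_sum_polytope: "half_sign_vectors \<subseteq> pair_sum_polytope"
proof
  fix v :: "real^'n" assume "v \<in> half_sign_vectors"
  then have half: "\<bar>v$i\<bar> = 1/2" for i unfolding half_sign_vectors_def by blast
  show "v \<in> pair_sum_polytope"
    by (rule pair_sum_polytopeI) (simp add: half)
qed

lemma signed_axis_extreme_point:
  assumes "CARD('n) \<ge> 2" and "\<bar>c\<bar> = 1"
  shows "axis i c extreme_point_of (pair_sum_polytope :: (real^'n) set)"
proof (rule extreme_point_of_Int_supporting_hyperplane_le[where a = "axis i c" and b = 1])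
  have cc: "c * c = 1" using assms(2) by (metis abs_mult_self_eq mult_1)
  have le: "axis i c \<bullet> z \<le> 1" if "z \<in> pair_sum_polytope" for z :: "real^'n"
  proof -
    have "c * z$i \<le> \<bar>c\<bar> * \<bar>z$i\<bar>" by (metis abs_ge_self abs_mult)
    then show ?thesis
      using pair_sum_polytope_abs_le_1[OF assms(1) that, of i] assms(2) by (simp add: inner_axis')
  qed
  then show "\<And>z. z \<in> pair_sum_polytope \<Longrightarrow> axis i c \<bullet> z \<le> 1" .
  show "pair_sum_polytope \<inter> {z. axis i c \<bullet> z = 1} = {axis i c}"
  proof (intro equalityI subsetI)
    fix z :: "real^'n" assume "z \<in> pair_sum_polytope \<inter> {z. axis i c \<bullet> z = 1}"
    then have z: "z \<in> pair_sum_polytope" and czi: "c * z$i = 1" by (auto simp: inner_axis')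
    then have zi: "z$i = c" using cc by (metis mult.left_commute mult_1_right)
    have "z$l = 0" if "l \<noteq> i" for l
      using pair_sum_polytopeD[OF z that[symmetric]] zi assms(2) by linarith
    with zi show "z \<in> {axis i c}" by (auto simp: vec_eq_iff axis_def)
  next
    fix z assume "z \<in> {axis i c}"
    then show "z \<in> pair_sum_polytope \<inter> {z. axis i c \<bullet> z = 1}"
      using signed_axes_subset_pair_sum_polytope assms(2) cc
      by (auto simp: signed_axes_def inner_axis_axis)
  qed
qed

lemma inner_self_half_sign_vector:
  fixes v :: "real^'n"
  assumes "v \<in> half_sign_vectors"
  shows "v \<bullet> v = CARD('n) / 4"
proof -
  have sq: "v$l * v$l = 1/4" for l
  proof -
    have half: "\<bar>v$l\<bar> = 1/2" using assms unfolding half_sign_vectors_def by blast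
    have "v$l * v$l = \<bar>v$l\<bar> * \<bar>v$l\<bar>" by (rule abs_mult_self_eq[symmetric])
    also have "\<dots> = 1/2 * (1/2)" unfolding half ..
    finally show ?thesis by simp
  qed
  show ?thesis unfolding inner_vec_def inner_real_def sq by simp
qed

lemma sum_abs_lt_half_card:
  fixes z :: "real^'n"
  assumes "CARD('n) \<ge> 3" and "z \<in> pair_sum_polytope" and "z \<notin> half_sign_vectors"
  shows "(\<Sum>l\<in>UNIV. \<bar>z$l\<bar>) < CARD('n) / 2"
proof -
  obtain k where "\<bar>z$k\<bar> - 1/2 \<noteq> 0"
    using assms(3) unfolding half_sign_vectors_def by auto
  have "(\<Sum>l\<in>UNIV. \<bar>z$l\<bar> - 1/2) < 0"
  proof (rule sum_neg_if_pairwise_nonpos[OF assms(1)])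
    show "\<bar>z$i\<bar> - 1/2 + (\<bar>z$j\<bar> - 1/2) \<le> 0" if "i \<noteq> j" for i j
      using pair_sum_polytopeD[OF assms(2) that] by linarith
  qed fact
  then show ?thesis by (simp add: sum_subtractf)
qed

lemma half_sign_vector_extreme_point:
  fixes v :: "real^'n"
  assumes "CARD('n) \<ge> 3" and v: "v \<in> half_sign_vectors"
  shows "v extreme_point_of pair_sum_polytope"
proof (rule extreme_point_of_Int_supporting_hyperplane_le[where a = v and b = "v \<bullet> v"])
  have half: "\<bar>v$l\<bar> = 1/2" for l using v unfolding half_sign_vectors_def by blast
  have inner_le: "v \<bullet> z \<le> (\<Sum>l\<in>UNIV. \<bar>z$l\<bar>) / 2" for z :: "real^'n"
  proof -
    have "v \<bullet> z \<le> (\<Sum>l\<in>UNIV. \<bar>v$l\<bar> * \<bar>z$l\<bar>)"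
      unfolding inner_vec_def inner_real_def by (intro sum_mono) (metis abs_ge_self abs_mult)
    also have "\<dots> = (\<Sum>l\<in>UNIV. \<bar>z$l\<bar>) / 2"
      by (simp add: half sum_divide_distrib)
    finally show ?thesis .
  qed
  have sum_le: "(\<Sum>l\<in>UNIV. \<bar>z$l\<bar>) \<le> CARD('n) / 2" if "z \<in> pair_sum_polytope" for z :: "real^'n"
  proof (cases "z \<in> half_sign_vectors")
    case True
    then have half_z: "\<bar>z$l\<bar> = 1/2" for l unfolding half_sign_vectors_def by blast
    show ?thesis by (simp add: half_z)
  next
    case False
    then show ?thesis using sum_abs_lt_half_card[OF assms(1) that] by simp
  qed
  show "v \<bullet> z \<le> v \<bullet> v" if "z \<in> pair_sum_polytope" for z
    using inner_le[of z] sum_le[OF that] inner_self_half_sign_vector[OF v] by simp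
  show "pair_sum_polytope \<inter> {z. v \<bullet> z = v \<bullet> v} = {v}"
  proof (intro equalityI subsetI)
    fix z assume "z \<in> pair_sum_polytope \<inter> {z. v \<bullet> z = v \<bullet> v}"
    then have z: "z \<in> pair_sum_polytope" and vz: "v \<bullet> z = v \<bullet> v" by auto
    have "z \<in> half_sign_vectors"
      using sum_abs_lt_half_card[OF assms(1) z] inner_le[of z] vz inner_self_half_sign_vector[OF v]
      by fastforce
    then have "(z - v) \<bullet> (z - v) = 0"
      using vz inner_self_half_sign_vector[OF v] inner_self_half_sign_vector[of z]
      by (simp add: inner_diff_left inner_diff_right inner_commute)
    then show "z \<in> {v}" by simp
  next
    fix z assume "z \<in> {v}"
    then show "z \<in> pair_sum_polytope \<inter> {z. v \<bullet> z = v \<bullet> v}"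
      using v half_sign_vectors_subset_pair_sum_polytope by auto
  qed
qed

lemma not_extreme_point_of_midpoint:
  fixes v d :: "'a::real_vector"
  assumes "d \<noteq> 0" and "v - d \<in> S" and "v + d \<in> S"
  shows "\<not> v extreme_point_of S"
proof -
  have "(v - d) + (v + d) = 2 *\<^sub>R v" by (simp add: scaleR_2)
  then have "midpoint (v - d) (v + d) = v" unfolding midpoint_def by simp
  moreover have "v - d \<noteq> v + d"
  proof
    assume "v - d = v + d"
    moreover have "(v + d) - (v - d) = 2 *\<^sub>R d" by (simp add: scaleR_2)
    ultimately have "2 *\<^sub>R d = 0" by simp
    then show False using assms(1) by simp
  qed
  ultimately have "v \<in> open_segment (v - d) (v + d)"
    using midpoint_in_open_segment by metis
  then show ?thesis using assms(2,3) unfolding extreme_point_of_def by blast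
qed

lemma add_axis_mem_pair_sum_polytope:
  fixes v :: "real^'n"
  assumes v: "v \<in> pair_sum_polytope" and "\<bar>t\<bar> \<le> e"
    and slack: "\<And>q. q \<noteq> j \<Longrightarrow> \<bar>v$j\<bar> + e + \<bar>v$q\<bar> \<le> 1"
  shows "v + axis j t \<in> pair_sum_polytope"
proof (rule pair_sum_polytopeI)
  fix p q :: 'n assume "p \<noteq> q"
  have coord: "(v + axis j t)$l = v$l + (if l = j then t else 0)" for l
    by (simp add: axis_def)
  have "\<bar>v$j + t\<bar> \<le> \<bar>v$j\<bar> + e" using assms(2) abs_triangle_ineq[of "v$j" t] by linarith
  then show "\<bar>(v + axis j t)$p\<bar> + \<bar>(v + axis j t)$q\<bar> \<le> 1"
    using pair_sum_polytopeD[OF v \<open>p \<noteq> q\<close>] slack[of p] slack[of q] \<open>p \<noteq> q\<close>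
    unfolding coord by (cases "p = j"; cases "q = j") auto
qed

text \<open>At an extreme point every coordinate lies in a tight pair: otherwise that coordinate
  alone can be moved in both directions.\<close>
lemma extreme_point_of_pair_sum_polytope_tight:
  assumes ext: "v extreme_point_of pair_sum_polytope"
  shows "\<exists>q. q \<noteq> j \<and> \<bar>v$j\<bar> + \<bar>v$q\<bar> = 1"
proof (rule ccontr)
  assume "\<nexists>q. q \<noteq> j \<and> \<bar>v$j\<bar> + \<bar>v$q\<bar> = 1"
  moreover have v: "v \<in> pair_sum_polytope" using ext unfolding extreme_point_of_def by blast
  ultimately have lt: "\<bar>v$j\<bar> + \<bar>v$q\<bar> < 1" if "q \<noteq> j" for q
    using pair_sum_polytopeD[OF v that[symmetric]] that by force
  define e where "e = Min (insert 1 ((\<lambda>q. 1 - \<bar>v$j\<bar> - \<bar>v$q\<bar>) ` (UNIV - {j})))"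
  have "0 < 1 - \<bar>v$j\<bar> - \<bar>v$q\<bar>" if "q \<noteq> j" for q using lt[OF that] by linarith
  then have "0 < e" unfolding e_def by auto
  have slack: "\<bar>v$j\<bar> + e + \<bar>v$q\<bar> \<le> 1" if "q \<noteq> j" for q
  proof -
    have "e \<le> 1 - \<bar>v$j\<bar> - \<bar>v$q\<bar>" unfolding e_def using that by (intro Min_le) auto
    then show ?thesis by linarith
  qed
  have "v + axis j e \<in> pair_sum_polytope" "v + axis j (- e) \<in> pair_sum_polytope"
    using \<open>0 < e\<close> by (auto intro!: add_axis_mem_pair_sum_polytope[OF v _ slack])
  moreover have "v + axis j (- e) = v - axis j e" by (simp add: vec_eq_iff axis_def)
  moreover have "axis j e \<noteq> 0" using \<open>0 < e\<close> by (simp add: axis_eq_0_iff)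
  ultimately show False using ext not_extreme_point_of_midpoint by metis
qed

lemma balanced_vector_mem_open_segment:
  fixes v :: "real^'n"
  assumes "1/2 < \<bar>v$k\<bar>" and "\<bar>v$k\<bar> < 1" and others: "\<And>j. j \<noteq> k \<Longrightarrow> \<bar>v$j\<bar> = 1 - \<bar>v$k\<bar>"
  shows "v \<in> open_segment (axis k (sgn (v$k))) (\<chi> l. sgn (v$l) / 2)"
  unfolding in_segment
proof (intro conjI exI)
  have "sgn (v$k) \<noteq> 0" using assms(1) by (simp add: sgn_eq_0_iff)
  then show "axis k (sgn (v$k)) \<noteq> (\<chi> l. sgn (v$l) / 2)"
    by (auto simp: vec_eq_iff axis_def)
  define u where "u = 2 - 2 * \<bar>v$k\<bar>"
  show "0 < u" "u < 1" unfolding u_def using assms(1,2) by auto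
  show "v = (1 - u) *\<^sub>R axis k (sgn (v$k)) + u *\<^sub>R (\<chi> l. sgn (v$l) / 2)"
  proof (subst vec_eq_iff, intro allI)
    fix l
    have "v$l = sgn (v$l) * \<bar>v$l\<bar>" by (simp add: sgn_mult_abs)
    also have "\<dots> = ((1 - u) *\<^sub>R axis k (sgn (v$k)) + u *\<^sub>R (\<chi> l. sgn (v$l) / 2))$l"
    proof (cases "l = k")
      case True
      then show ?thesis unfolding u_def by (simp add: axis_def algebra_simps)
    next
      case False
      have "((1 - u) *\<^sub>R axis k (sgn (v$k)) + u *\<^sub>R (\<chi> l. sgn (v$l) / 2))$l
          = u * (sgn (v$l) / 2)"
        using False by (simp add: axis_def)
      also have "\<dots> = sgn (v$l) * \<bar>v$l\<bar>"
        unfolding u_def others[OF False] by (simp add: algebra_simps)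
      finally show ?thesis by (rule sym)
    qed
    finally show "v$l = \<dots>" .
  qed
qed

lemma balanced_vector_not_extreme_point:
  fixes v :: "real^'n"
  assumes "1/2 < \<bar>v$k\<bar>" and "\<bar>v$k\<bar> < 1" and others: "\<And>j. j \<noteq> k \<Longrightarrow> \<bar>v$j\<bar> = 1 - \<bar>v$k\<bar>"
  shows "\<not> v extreme_point_of pair_sum_polytope"
proof -
  have nz: "v$l \<noteq> 0" for l
    using others[of l] assms(1,2) by (cases "l = k") auto
  then have sgn1: "\<bar>sgn (v$l)\<bar> = 1" for l by (simp add: abs_sgn_eq)
  then have "axis k (sgn (v$k)) \<in> signed_axes" unfolding signed_axes_def by blast
  then have "axis k (sgn (v$k)) \<in> pair_sum_polytope"
    using signed_axes_subset_pair_sum_polytope by blast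
  moreover have "(\<chi> l. sgn (v$l) / 2) \<in> half_sign_vectors"
    unfolding half_sign_vectors_def by (simp add: sgn1 nz)
  then have "(\<chi> l. sgn (v$l) / 2) \<in> pair_sum_polytope"
    using half_sign_vectors_subset_pair_sum_polytope by blast
  ultimately show ?thesis
    using balanced_vector_mem_open_segment[OF assms] unfolding extreme_point_of_def by blast
qed

lemma extreme_point_of_pair_sum_polytope_cases:
  fixes v :: "real^'n"
  assumes ext: "v extreme_point_of pair_sum_polytope"
  shows "v \<in> signed_axes \<union> half_sign_vectors"
proof -
  have v: "v \<in> pair_sum_polytope" using ext unfolding extreme_point_of_def by blast
  note tight = extreme_point_of_pair_sum_polytope_tight[OF ext]
  obtain k where k: "\<And>l. \<bar>v$l\<bar> \<le> \<bar>v$k\<bar>"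
  proof -
    let ?M = "Max (range (\<lambda>l. \<bar>v$l\<bar>))"
    have "?M \<in> range (\<lambda>l. \<bar>v$l\<bar>)" by (intro Max_in) auto
    then obtain k where "?M = \<bar>v$k\<bar>" by blast
    moreover have "\<bar>v$l\<bar> \<le> ?M" for l by (rule Max_ge) auto
    ultimately show ?thesis using that by metis
  qed
  show ?thesis
  proof (cases "\<bar>v$k\<bar> \<le> 1/2")
    case True
    have "\<bar>v$j\<bar> = 1/2" for j
    proof -
      obtain q where "\<bar>v$j\<bar> + \<bar>v$q\<bar> = 1" using tight[of j] by blast
      then show ?thesis using k[of j] k[of q] True by linarith
    qed
    then show ?thesis unfolding half_sign_vectors_def by blast
  next
    case False
    have small: "\<bar>v$j\<bar> \<le> 1 - \<bar>v$k\<bar>" if "j \<noteq> k" for j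
      using pair_sum_polytopeD[OF v that[symmetric]] by linarith
    have others: "\<bar>v$j\<bar> = 1 - \<bar>v$k\<bar>" if "j \<noteq> k" for j
    proof -
      obtain q where q: "q \<noteq> j" "\<bar>v$j\<bar> + \<bar>v$q\<bar> = 1" using tight[of j] by blast
      have "q = k"
      proof (rule ccontr)
        assume "q \<noteq> k"
        then show False using small[OF that] small[of q] q(2) False by linarith
      qed
      then show ?thesis using q(2) by simp
    qed
    have "\<bar>v$k\<bar> \<le> 1" using tight[of k] by force
    show ?thesis
    proof (cases "\<bar>v$k\<bar> = 1")
      case True
      then have "v = axis k (v$k)"
        using others by (auto simp: vec_eq_iff axis_def)
      then show ?thesis using True unfolding signed_axes_def by blast
    next
      case False
      have "1/2 < \<bar>v$k\<bar>" "\<bar>v$k\<bar> < 1" using \<open>\<not> \<bar>v$k\<bar> \<le> 1/2\<close> \<open>\<bar>v$k\<bar> \<le> 1\<close> False by auto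
      then show ?thesis using balanced_vector_not_extreme_point[of v k] others ext by blast
    qed
  qed
qed

lemma vertices_voronoi_Dn:
  assumes "CARD('n) \<ge> 3"
  shows "vertices (voronoi (Dn :: (real^'n) set)) = signed_axes \<union> half_sign_vectors"
proof -
  have "CARD('n) \<ge> 2" using assms by simp
  then show ?thesis
    unfolding vertices_def voronoi_Dn_eq[OF \<open>CARD('n) \<ge> 2\<close>]
    using extreme_point_of_pair_sum_polytope_cases signed_axis_extreme_point
      half_sign_vector_extreme_point[OF assms]
    by (auto simp: signed_axes_def)
qed

lemma signed_axis_add_signed_axis:
  fixes i j :: "'n::finite"
  assumes "CARD('n) \<ge> 2" and "\<bar>c\<bar> = 1" and "\<bar>d\<bar> = 1"
  defines "s \<equiv> axis i c + axis j d :: real^'n"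
  shows "s = 0 \<or> (\<exists>p q. p \<noteq> q \<and> 2 \<le> \<bar>s$p\<bar> + \<bar>s$q\<bar>)"
proof (cases "i = j")
  case False
  then show ?thesis using assms(2,3) unfolding s_def
    by (intro disjI2 exI[of _ i] exI[of _ j]) (simp add: axis_def)
next
  case True
  show ?thesis
  proof (cases "d = - c")
    case True
    then show ?thesis using \<open>i = j\<close> unfolding s_def by (simp add: vec_eq_iff axis_def)
  next
    case False
    then have "d = c" using assms(2,3) by (auto simp: abs_if split: if_splits)
    obtain l where "l \<noteq> i" using exists_other_index[OF assms(1)] by metis
    then show ?thesis using \<open>i = j\<close> \<open>d = c\<close> assms(2) unfolding s_def
      by (intro disjI2 exI[of _ i] exI[of _ l]) (simp add: axis_def)
  qed
qed

lemma signed_axis_add_half_sign_vector: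
  fixes w :: "real^'n" and i :: 'n
  assumes "CARD('n) \<ge> 2" and c: "\<bar>c\<bar> = 1" and w: "w \<in> half_sign_vectors"
  defines "s \<equiv> axis i c + w"
  shows "s \<in> half_sign_vectors \<or> (\<exists>p q. p \<noteq> q \<and> 2 \<le> \<bar>s$p\<bar> + \<bar>s$q\<bar>)"
proof -
  have wl: "\<bar>w$l\<bar> = 1/2" for l using w unfolding half_sign_vectors_def by blast
  have coord: "s$l = (if l = i then c else 0) + w$l" for l unfolding s_def by (simp add: axis_def)
  have "w$i = c/2 \<or> w$i = - c/2" using wl[of i] c by arith
  then show ?thesis
  proof
    assume "w$i = c/2"
    obtain l where "l \<noteq> i" using exists_other_index[OF assms(1)] by metis
    moreover have "\<bar>s$i\<bar> = 3/2" using \<open>w$i = c/2\<close> c unfolding coord by (auto simp: abs_if)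
    moreover have "\<bar>s$l\<bar> = 1/2" using \<open>l \<noteq> i\<close> wl unfolding coord by simp
    ultimately show ?thesis by (intro disjI2 exI[of _ i] exI[of _ l]) simp
  next
    assume "w$i = - c/2"
    have "\<bar>s$l\<bar> = 1/2" for l
    proof (cases "l = i")
      case True
      then show ?thesis using \<open>w$i = - c/2\<close> c unfolding coord by simp
    next
      case False
      then show ?thesis using wl unfolding coord by simp
    qed
    then show ?thesis unfolding half_sign_vectors_def by blast
  qed
qed

lemma half_sign_vector_add_half_sign_vector:
  fixes v w :: "real^'n"
  assumes v: "v \<in> half_sign_vectors" and w: "w \<in> half_sign_vectors"
  shows "v + w = 0 \<or> v + w \<in> signed_axes \<or> (\<exists>p q. p \<noteq> q \<and> 2 \<le> \<bar>(v + w)$p\<bar> + \<bar>(v + w)$q\<bar>)"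
proof -
  have half: "\<bar>v$l\<bar> = 1/2" "\<bar>w$l\<bar> = 1/2" for l
    using v w unfolding half_sign_vectors_def by blast+
  have pm: "v$l = 1/2 \<or> v$l = -1/2" "w$l = 1/2 \<or> w$l = -1/2" for l
    using half[of l] by arith+
  have equal: "\<bar>(v + w)$l\<bar> = 1" if "v$l = w$l" for l using that pm[of l] by auto
  have opposite: "(v + w)$l = 0" if "v$l \<noteq> w$l" for l using that pm[of l] by auto
  consider (two) p q where "p \<noteq> q" "v$p = w$p" "v$q = w$q"
    | (one) p where "v$p = w$p" "\<And>l. l \<noteq> p \<Longrightarrow> v$l \<noteq> w$l"
    | (none) "\<And>l. v$l \<noteq> w$l"
  proof (cases "\<exists>p q. p \<noteq> q \<and> v$p = w$p \<and> v$q = w$q")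
    case False
    show ?thesis
    proof (cases "\<exists>p. v$p = w$p")
      case True
      then obtain p where "v$p = w$p" by blast
      moreover have "v$l \<noteq> w$l" if "l \<noteq> p" for l using False \<open>v$p = w$p\<close> that by blast
      ultimately show ?thesis using that(2) by blast
    qed (use that(3) in blast)
  qed (use that(1) in blast)
  then show ?thesis
  proof cases
    case two
    then have "2 \<le> \<bar>(v + w)$p\<bar> + \<bar>(v + w)$q\<bar>"
      using equal[OF two(2)] equal[OF two(3)] by linarith
    then show ?thesis using two(1) by blast
  next
    case one
    have "v + w = axis p (2 * v$p)"
      using one opposite by (auto simp: vec_eq_iff axis_def)
    moreover have "\<bar>2 * v$p\<bar> = 1" using pm[of p] by auto
    ultimately show ?thesis unfolding signed_axes_def by blast
  next
    case none
    then show ?thesis using opposite by (simp add: vec_eq_iff)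
  qed
qed

lemma vertex_add_vertex_cases:
  fixes v w :: "real^'n"
  assumes "CARD('n) \<ge> 2"
    and v: "v \<in> signed_axes \<union> half_sign_vectors" and w: "w \<in> signed_axes \<union> half_sign_vectors"
  shows "v + w = 0 \<or> v + w \<in> signed_axes \<union> half_sign_vectors
    \<or> (\<exists>p q. p \<noteq> q \<and> 2 \<le> \<bar>(v + w)$p\<bar> + \<bar>(v + w)$q\<bar>)"
proof -
  consider (aa) i c j d where "v = axis i c" "\<bar>c\<bar> = 1" "w = axis j d" "\<bar>d\<bar> = 1"
    | (ah) i c where "v = axis i c" "\<bar>c\<bar> = 1" "w \<in> half_sign_vectors"
    | (ha) j d where "v \<in> half_sign_vectors" "w = axis j d" "\<bar>d\<bar> = 1"
    | (hh) "v \<in> half_sign_vectors" "w \<in> half_sign_vectors"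
    using v w unfolding signed_axes_def by blast
  then show ?thesis
  proof cases
    case aa
    then show ?thesis
      unfolding aa(1,3) using signed_axis_add_signed_axis[OF assms(1) aa(2,4), of i j] by blast
  next
    case ah
    then show ?thesis
      unfolding ah(1) using signed_axis_add_half_sign_vector[OF assms(1) ah(2,3), of i] by blast
  next
    case ha
    have "axis j d + v \<in> half_sign_vectors
        \<or> (\<exists>p q. p \<noteq> q \<and> 2 \<le> \<bar>(axis j d + v)$p\<bar> + \<bar>(axis j d + v)$q\<bar>)"
      by (rule signed_axis_add_half_sign_vector[OF assms(1) ha(3,1)])
    then show ?thesis unfolding ha(2) add.commute[of "axis j d" v] by blast
  next
    case hh
    then show ?thesis using half_sign_vector_add_half_sign_vector by blast
  qed
qed

lemma cayley_dist_le_walk: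
  "cayley_walk A S k u v \<Longrightarrow> cayley_dist A S u v \<le> enat k"
  unfolding cayley_dist_def by (rule INF_lower) simp

lemma cayley_walk_of_dist:
  assumes "cayley_dist A S u v = enat k"
  shows "cayley_walk A S k u v"
proof -
  let ?K = "{k. cayley_walk A S k u v}"
  have "?K \<noteq> {}"
  proof
    assume "?K = {}"
    then have "cayley_dist A S u v = \<infinity>" unfolding cayley_dist_def by (simp add: top_enat_def)
    then show False using assms by simp
  qed
  then obtain k0 where "cayley_walk A S k0 u v" by blast
  define m where "m = (LEAST k. cayley_walk A S k u v)"
  have m: "m \<in> ?K" unfolding m_def using \<open>cayley_walk A S k0 u v\<close> by (auto intro: LeastI)
  have least: "m \<le> m'" if "m' \<in> ?K" for m' unfolding m_def using that by (auto intro: Least_le)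
  have "cayley_dist A S u v = enat m"
  proof (rule antisym)
    show "cayley_dist A S u v \<le> enat m" using m by (simp add: cayley_dist_le_walk)
    show "enat m \<le> cayley_dist A S u v"
      unfolding cayley_dist_def by (rule INF_greatest) (simp add: least)
  qed
  then show ?thesis using m assms by simp
qed

lemma cayley_dist_eq_2_path:
  assumes "cayley_dist A S u v = 2"
  obtains w where "u - w \<in> S" and "w - v \<in> S"
proof -
  have "cayley_walk A S (Suc (Suc 0)) u v"
    using cayley_walk_of_dist[of A S u v 2] assms by (simp add: numeral_eq_enat numeral_2_eq_2)
  then show ?thesis using that by auto
qed

lemma cayley_dist_eq_2_not_adjacent:
  assumes "u \<in> A" and "v \<in> A" and "cayley_dist A S u v = 2"
  shows "u \<noteq> v" and "u - v \<notin> S"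
proof -
  have no_walk: "\<not> cayley_walk A S k u v" if "k < 2" for k
  proof
    assume "cayley_walk A S k u v"
    then have "cayley_dist A S u v \<le> enat k" by (rule cayley_dist_le_walk)
    then show False using assms(3) that by (simp add: numeral_eq_enat)
  qed
  show "u \<noteq> v" using no_walk[of 0] assms(1) by auto
  show "u - v \<notin> S" using no_walk[of "Suc 0"] assms(1,2) by auto
qed

theorem lemma14:
  fixes u1 u2 :: "real^'n"
  assumes "CARD('n) \<ge> 4"
    and "u1 \<in> scale_set (1/2) (dual_lattice Dn)"
    and "u2 \<in> scale_set (1/2) (dual_lattice Dn)"
    and "cayley_dist (scale_set (1/2) (dual_lattice Dn))
           (scale_set (1/2) (vertices (voronoi Dn))) u1 u2 = 2"
  shows "gauge_norm (voronoi Dn) (u1 - u2) = 1"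
proof -
  have card: "CARD('n) \<ge> 2" "CARD('n) \<ge> 3" using assms(1) by simp_all
  define V :: "(real^'n) set" where "V = signed_axes \<union> half_sign_vectors"
  define S where "S = scale_set (1/2) (vertices (voronoi (Dn :: (real^'n) set)))"
  have S: "S = (\<lambda>v. (1/2) *\<^sub>R v) ` V"
    unfolding S_def V_def scale_set_def vertices_voronoi_Dn[OF card(2)] ..
  obtain w where "u1 - w \<in> S" "w - u2 \<in> S"
    using cayley_dist_eq_2_path[OF assms(4)] unfolding S_def by blast
  then obtain v1 v2 where v: "v1 \<in> V" "v2 \<in> V"
    and "u1 - w = (1/2) *\<^sub>R v1" "w - u2 = (1/2) *\<^sub>R v2"
    unfolding S by blast
  moreover have "u1 - u2 = (u1 - w) + (w - u2)" by simp
  ultimately have diff: "u1 - u2 = (1/2) *\<^sub>R (v1 + v2)" by (simp add: scaleR_add_right)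
  have "u1 - u2 \<noteq> 0" and "u1 - u2 \<notin> S"
    using cayley_dist_eq_2_not_adjacent[OF assms(2,3,4)] unfolding S_def by auto
  then obtain i j where "i \<noteq> j" and two: "2 \<le> \<bar>(v1 + v2)$i\<bar> + \<bar>(v1 + v2)$j\<bar>"
    using vertex_add_vertex_cases[OF card(1) v[unfolded V_def]] unfolding diff S V_def by auto
  have "V \<subseteq> pair_sum_polytope"
    unfolding V_def
    using signed_axes_subset_pair_sum_polytope half_sign_vectors_subset_pair_sum_polytope by blast
  then have "(1/2) *\<^sub>R v1 + (1/2) *\<^sub>R v2 \<in> pair_sum_polytope"
    using v by (intro convexD[OF convex_pair_sum_polytope]) auto
  then have "u1 - u2 \<in> pair_sum_polytope" unfolding diff by (simp add: scaleR_add_right)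
  moreover have "1 \<le> \<bar>(u1 - u2)$i\<bar> + \<bar>(u1 - u2)$j\<bar>" using two unfolding diff by simp
  ultimately show ?thesis
    unfolding voronoi_Dn_eq[OF card(1)] by (rule gauge_norm_pair_sum_polytope_eq_1[OF _ \<open>i \<noteq> j\<close>])
qed

end
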